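(* Consider the sequence of distributed systems under the RJSQ policy described in the context (origins unknown or known). Assume the systems are initially empty, $\lim_{n\to\infty}\sqrt n(1-\rho_n)=\beta\in\mathbb R$, $\lim\chi_n=0$, $\lim\sqrt n\chi_n=\infty$, $\mathbb E[z(1)^4]+\sum_{k=1}^s\mathbb E[w_k(1)^4]<\infty$, and $\lim_{n\to\infty}\sqrt n\chi_n/\sqrt{\log\log n}=\infty$, and let $C,C'>0$ be constants such that for each $T>0$, almost surely, $\sup_{0\le t\le T}\max_{k,\ell}|\tilde L_{n,k}(t)-\tilde L_{n,\ell}(t)|<\max\{C\chi_n,\,C'(\log\log n+\log(n\chi_n^2))/(\sqrt n\chi_n)\}$ for all large $n$. Then the order of magnitude (in $n$) of the upper bound $\max\{C\chi_n,\,C'(\log\log n+\log(n\chi_n^2))/(\sqrt n\chi_n)\}$ is minimized by choosing $\chi_n=C''n^{-1/4}\sqrt{\log n}$ with $C''>0$; and with this choice, for every $T>0$, with probability 1, \[ \sup_{0\le t\le T}\max_{k,\ell=1,\ldots,s}|\tilde L_{n,k}(t)-\tilde L_{n,\ell}(t)|=O\big(n^{-1/4}\sqrt{\log n}\big). \]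
   Context: Setting (distributed systems under RJSQ). Fix integers $s\ge 2$, $b\ge 1$, and rates $0<\mu_1\le\cdots\le\mu_s$; put $\mu=\sum_{k=1}^s\mu_k$. For each $n\in\mathbb{N}$ there is a system with $s$ stations; each station has one work-conserving server, unlimited waiting room and FCFS discipline. All systems are driven by the following mutually independent primitives: (1) i.i.d. nonnegative $z(1),z(2),\ldots$ with mean $1$ and coefficient of variation $c_0<\infty$; (2) for each $k$, i.i.d. nonnegative $w_k(1),w_k(2),\ldots$ with mean $1$ and coefficient of variation $c_k<\infty$, where $w_k(i)$ is the service requirement of the $i$th customer served at station $k$, whose service time there is $w_k(i)/\mu_k$; (3) i.i.d. random vectors $\boldsymbol\gamma(j)=(\gamma_1(j),\ldots,\gamma_s(j))$ with $\mathbb{P}[\boldsymbol\gamma(j)=\boldsymbol d_m]=p_m>0$ for $m=1,\ldots,b$, where $\boldsymbol d_m=(d_{m,1},\ldots,d_{m,s})\in\mathbb{R}_+^s$ and $\sum_m p_m=1$ (customer $j$ is "from origin $m$" if $\boldsymbol\gamma(j)=\boldsymbol d_m$); (4) i.i.d. uniform$(0,1)$ variables $u(1),u(2),\ldots$. In system $n$, with $\lambda_n>0$ and $\rho_n=\lambda_n/\mu$, customer $j$ appears at time $a_n(j)=\sum_{i\le j}z(i)/\lambda_n$; if sent to station $k$ it arrives there at time $a_n(j)+\sqrt{n}\gamma_k(j)$ and stays until its service completes. $Q_{n,k}(t)$ is the number of customers present at station $k$ at time $t$, $L_{n,k}(t)=Q_{n,k}(t)/\mu_k$, $\tilde Q_{n,k}(t)=Q_{n,k}(nt)/\sqrt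 n$, $\tilde L_{n,k}(t)=\tilde Q_{n,k}(t)/\mu_k$. A routing plan is an array $r_{m,k}\in[0,1]$ with $\sum_k r_{m,k}=1$ for each $m$ and $\mu_k=\mu\sum_m p_m r_{m,k}$ for each $k$. RJSQ policy with balancing fraction $\chi_n>0$: when customer $j$ appears, a permutation $(\zeta_{n,1}(j),\ldots,\zeta_{n,s}(j))$ of $\{1,\ldots,s\}$ is chosen with $L_{n,\zeta_{n,1}(j)}(a_n(j)-)\le\cdots\le L_{n,\zeta_{n,s}(j)}(a_n(j)-)$ (ties broken by an arbitrary rule), and $\pi_{n,k}(j)=\ell$ iff $\zeta_{n,\ell}(j)=k$. Perturbation coefficients $\varepsilon_{n,1},\ldots,\varepsilon_{n,s}$ satisfy $\sum_\ell\varepsilon_{n,\ell}=0$, $\varepsilon_{n,1}=\chi_n$, $\varepsilon_{n,\ell}<0$ for $\ell\ge2$, $0\le\mu_k/\mu+\varepsilon_{n,\ell}\le1$ for all $k,\ell$, and there is $\delta_0>0$ with $\varepsilon_{n,\ell}\le-\delta_0\chi_n$ for all $\ell\ge2$ and $n$. If origins are unknown, customer $j$ is sent to station $k$ iff $\kappa_{n,k-1}(j)\le u(j)<\kappa_{n,k}(j)$, where $\kappa_{n,0}(j)=0$ and $\kappa_{n,k}(j)=\sum_{\ell\le k}(\mu_\ell/\mu+\varepsilon_{n,\pi_{n,\ell}(j)})$ (the routing plan is then $r_{m,k}=\mu_k/\mu$). If origins are known, a routing plan $r$ is fixed and coefficients $\varepsilon^m_{n,\ell}(j)$ ($m\le b$,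 $\ell\le s$, $j\in\mathbb N$), determined by $(\pi_{n,1}(j),\ldots,\pi_{n,s}(j))$, satisfy $\sum_\ell\varepsilon^m_{n,\ell}(j)=0$, $\sum_m p_m\varepsilon^m_{n,\ell}(j)=\varepsilon_{n,\ell}$, $\varepsilon^m_{n,1}(j)\ge0$, $\varepsilon^m_{n,\ell}(j)\le0$ for $\ell\ge2$, and $0\le r_{m,k}+\varepsilon^m_{n,\pi_{n,k}(j)}(j)\le1$; a customer $j$ from origin $m$ is sent to station $k$ iff $\kappa^m_{n,k-1}(j)\le u(j)<\kappa^m_{n,k}(j)$, where $\kappa^m_{n,0}(j)=0$, $\kappa^m_{n,k}(j)=\sum_{\ell\le k}(r_{m,\ell}+\varepsilon^m_{n,\pi_{n,\ell}(j)}(j))$. "Initially empty" means no customers are present at time $0$. *)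

theory Defs
  imports "HOL-Probability.Probability" "HOL-Library.Landau_Symbols"
begin

text \<open>Indices of the primitive random variables: z(j), w_k(j), origin of customer j, u(j).\<close>
datatype prim_idx = PZ nat | PW nat nat | PG nat | PU nat

definition prim_family ::
  "(nat \<Rightarrow> 'a \<Rightarrow> real) \<Rightarrow> (nat \<Rightarrow> nat \<Rightarrow> 'a \<Rightarrow> real) \<Rightarrow> (nat \<Rightarrow> 'a \<Rightarrow> nat)
   \<Rightarrow> (nat \<Rightarrow> 'a \<Rightarrow> real) \<Rightarrow> prim_idx \<Rightarrow> 'a \<Rightarrow> real" where
  "prim_family z w og u i = (case i of PZ j \<Rightarrow> z j | PW k j \<Rightarrow> w k j
      | PG j \<Rightarrow> (\<lambda>x. real (og j x)) | PU j \<Rightarrow> u j)"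

definition prim_index :: "nat \<Rightarrow> prim_idx set" where
  "prim_index s = {PZ j | j. 1 \<le> j} \<union> {PW k j | k j. k \<in> {1..s} \<and> 1 \<le> j}
      \<union> {PG j | j. 1 \<le> j} \<union> {PU j | j. 1 \<le> j}"

text \<open>FCFS single-server station fed by customers S arriving at times A (ties in arrival
  time broken by customer index); ws i is the service requirement of the i-th customer served.\<close>
definition fcfs_before :: "(nat \<Rightarrow> real) \<Rightarrow> nat \<Rightarrow> nat \<Rightarrow> bool" where
  "fcfs_before A i j \<longleftrightarrow> A i < A j \<or> (A i = A j \<and> i \<le> j)"

definition fcfs_rank :: "(nat \<Rightarrow> real) \<Rightarrow> nat set \<Rightarrow> nat \<Rightarrow> nat" where
  "fcfs_rank A S j = card {i \<in> S. fcfs_before A i j \<and> i \<noteq> j}"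

definition fcfs_departure ::
  "(nat \<Rightarrow> real) \<Rightarrow> nat set \<Rightarrow> (nat \<Rightarrow> real) \<Rightarrow> real \<Rightarrow> nat \<Rightarrow> real" where
  "fcfs_departure A S ws mu j = Max ((\<lambda>i. A i +
      (\<Sum>l\<in>{l \<in> S. fcfs_before A i l \<and> fcfs_before A l j}. ws (fcfs_rank A S l + 1) / mu))
      ` {i \<in> S. fcfs_before A i j})"

definition fcfs_count ::
  "(nat \<Rightarrow> real) \<Rightarrow> nat set \<Rightarrow> (nat \<Rightarrow> real) \<Rightarrow> real \<Rightarrow> real \<Rightarrow> nat" where
  "fcfs_count A S ws mu t = card {j \<in> S. A j \<le> t \<and> t < fcfs_departure A S ws mu j}"

definition appear_time :: "(nat \<Rightarrow> real) \<Rightarrow> (nat \<Rightarrow> 'a \<Rightarrow> real) \<Rightarrow> nat \<Rightarrow> nat \<Rightarrow> 'a \<Rightarrow> real" where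
  "appear_time lam z n j x = (\<Sum>i=1..j. z i x) / lam n"

text \<open>Q_{n,k}(t): customer j (from origin og j) routed by rt n j to station k arrives there at
  a_n(j) + sqrt n * gamma_k(j), with gamma(j) = d_{og j}.\<close>
definition queue_len ::
  "(nat \<Rightarrow> real) \<Rightarrow> (nat \<Rightarrow> 'a \<Rightarrow> real) \<Rightarrow> (nat \<Rightarrow> nat \<Rightarrow> 'a \<Rightarrow> real) \<Rightarrow> (nat \<Rightarrow> 'a \<Rightarrow> nat)
   \<Rightarrow> (nat \<Rightarrow> nat \<Rightarrow> real) \<Rightarrow> (nat \<Rightarrow> real) \<Rightarrow> (nat \<Rightarrow> nat \<Rightarrow> 'a \<Rightarrow> nat)
   \<Rightarrow> nat \<Rightarrow> nat \<Rightarrow> real \<Rightarrow> 'a \<Rightarrow> real" where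
  "queue_len lam z w og d mu rt n k t x =
     real (fcfs_count (\<lambda>j. appear_time lam z n j x + sqrt (real n) * d (og j x) k)
        {j. 1 \<le> j \<and> rt n j x = k} (\<lambda>i. w k i x) (mu k) t)"

definition scaled_load ::
  "(nat \<Rightarrow> real) \<Rightarrow> (nat \<Rightarrow> 'a \<Rightarrow> real) \<Rightarrow> (nat \<Rightarrow> nat \<Rightarrow> 'a \<Rightarrow> real) \<Rightarrow> (nat \<Rightarrow> 'a \<Rightarrow> nat)
   \<Rightarrow> (nat \<Rightarrow> nat \<Rightarrow> real) \<Rightarrow> (nat \<Rightarrow> real) \<Rightarrow> (nat \<Rightarrow> nat \<Rightarrow> 'a \<Rightarrow> nat)
   \<Rightarrow> nat \<Rightarrow> nat \<Rightarrow> real \<Rightarrow> 'a \<Rightarrow> real" where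
  "scaled_load lam z w og d mu rt n k t x =
     queue_len lam z w og d mu rt n k (real n * t) x / sqrt (real n) / mu k"

definition ranks_sorted :: "nat \<Rightarrow> (nat \<Rightarrow> real) \<Rightarrow> (nat \<Rightarrow> nat) \<Rightarrow> bool" where
  "ranks_sorted s Lv rk \<longleftrightarrow> bij_betw rk {1..s} {1..s} \<and>
     (\<forall>k\<in>{1..s}. \<forall>k'\<in>{1..s}. rk k < rk k' \<longrightarrow> Lv k \<le> Lv k')"

definition rjsq_weight ::
  "bool \<Rightarrow> nat \<Rightarrow> (nat \<Rightarrow> real) \<Rightarrow> (nat \<Rightarrow> nat \<Rightarrow> real) \<Rightarrow> (nat \<Rightarrow> nat \<Rightarrow> real)
   \<Rightarrow> (nat \<Rightarrow> nat \<Rightarrow> nat \<Rightarrow> nat list \<Rightarrow> real) \<Rightarrow> nat \<Rightarrow> nat \<Rightarrow> (nat \<Rightarrow> nat) \<Rightarrow> nat \<Rightarrow> real" where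
  "rjsq_weight known s mu eps r epsm n m rk l =
     (if known then r m l + epsm n m (rk l) (map rk [1..<Suc s])
      else mu l / (\<Sum>k=1..s. mu k) + eps n (rk l))"

definition rjsq_kappa ::
  "bool \<Rightarrow> nat \<Rightarrow> (nat \<Rightarrow> real) \<Rightarrow> (nat \<Rightarrow> nat \<Rightarrow> real) \<Rightarrow> (nat \<Rightarrow> nat \<Rightarrow> real)
   \<Rightarrow> (nat \<Rightarrow> nat \<Rightarrow> nat \<Rightarrow> nat list \<Rightarrow> real) \<Rightarrow> nat \<Rightarrow> nat \<Rightarrow> (nat \<Rightarrow> nat) \<Rightarrow> nat \<Rightarrow> real" where
  "rjsq_kappa known s mu eps r epsm n m rk k = (\<Sum>l=1..k. rjsq_weight known s mu eps r epsm n m rk l)"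

text \<open>sup over [0,T] of max_{k,l} |Lt k t - Lt l t|, taken in the extended reals so that it is
  always well defined (possibly infinite).\<close>
definition max_imbalance :: "nat \<Rightarrow> (nat \<Rightarrow> real \<Rightarrow> real) \<Rightarrow> real \<Rightarrow> ereal" where
  "max_imbalance s Lt T =
     (SUP t\<in>{0..T}. ereal (Max {\<bar>Lt k t - Lt l t\<bar> | k l. k \<in> {1..s} \<and> l \<in> {1..s}}))"

definition rjsq_bound :: "real \<Rightarrow> real \<Rightarrow> (nat \<Rightarrow> real) \<Rightarrow> nat \<Rightarrow> real" where
  "rjsq_bound C C' chi n = max (C * chi n)
     (C' * (ln (ln (real n)) + ln (real n * (chi n)\<^sup>2)) / (sqrt (real n) * chi n))"

definition admissible_chi :: "(nat \<Rightarrow> real) \<Rightarrow> bool" where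
  "admissible_chi chi \<longleftrightarrow> eventually (\<lambda>n. 0 < chi n) sequentially \<and> chi \<longlonglongrightarrow> 0 \<and>
     filterlim (\<lambda>n. sqrt (real n) * chi n) at_top sequentially \<and>
     filterlim (\<lambda>n. sqrt (real n) * chi n / sqrt (ln (ln (real n)))) at_top sequentially"

end

theory Submission
  imports Defs "HOL-Real_Asymp.Real_Asymp"
begin

text \<open>Write \<open>h n = n powr (-1/4) * sqrt (ln n)\<close> and \<open>x = sqrt n * \<chi> n\<close>, so that the bound
  is \<open>max (C \<chi> n) (C' (ln (ln n) + 2 ln x) / x)\<close>. For \<open>\<chi> = C'' h\<close> both terms are \<open>O(h)\<close>.
  Conversely, for any admissible \<open>\<chi>\<close>, either \<open>\<chi> n \<ge> h n\<close> and the first term is at least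
  \<open>C h n\<close>, or \<open>x \<le> sqrt n h n = ln n / h n\<close>; in the latter case either \<open>x \<ge> n powr (1/8)\<close>, so
  \<open>ln x \<ge> ln n / 8\<close> and the second term is at least \<open>C' h n / 4\<close>, or \<open>x < n powr (1/8)\<close> and
  the second term is at least \<open>C' n powr (-1/8) \<ge> C' h n\<close>. The almost sure statement is the
  assumed bound combined with \<open>rjsq_bound C C' \<chi> = O(h)\<close>.\<close>

lemma max_in_bigo:
  fixes f g h :: "'a \<Rightarrow> real"
  assumes "f \<in> O[F](h)" "g \<in> O[F](h)"
  shows "(\<lambda>x. max (f x) (g x)) \<in> O[F](h)"
proof -
  have "(\<lambda>x. max (f x) (g x)) \<in> O[F](\<lambda>x. \<bar>f x\<bar> + \<bar>g x\<bar>)"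
    by (intro bigoI[where c = 1]) (simp add: max_def)
  moreover have "(\<lambda>x. \<bar>f x\<bar> + \<bar>g x\<bar>) \<in> O[F](h)"
    using assms by (intro sum_in_bigo) simp_all
  ultimately show ?thesis
    by (rule landau_o.big_trans)
qed

lemma admissible_chi_rate:
  assumes "0 < c"
  shows "admissible_chi (\<lambda>n. c * real n powr (-1/4) * sqrt (ln (real n)))"
  unfolding admissible_chi_def using assms
  by (intro conjI; real_asymp)

lemma rjsq_bound_rate_bigo:
  assumes "0 < c"
  shows "(\<lambda>n. rjsq_bound C C' (\<lambda>n. c * real n powr (-1/4) * sqrt (ln (real n))) n)
           \<in> O(\<lambda>n. real n powr (-1/4) * sqrt (ln (real n)))"
  unfolding rjsq_bound_def using assms
  by (intro max_in_bigo; real_asymp)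

lemma log_term_ge_rate:
  fixes n x h C' :: real
  assumes n: "2 \<le> n" and C': "0 < C'" and x: "1 \<le> x" "x \<le> sqrt n * h"
    and h: "0 < h" "sqrt n * h\<^sup>2 = ln n" "h \<le> n powr (-1/8)"
    and lnln: "1 \<le> ln (ln n)"
  shows "C' / 4 * h \<le> C' * (ln (ln n) + 2 * ln x) / x"
proof (cases "n powr (1/8) \<le> x")
  case True
  have "ln n / 8 = ln (n powr (1/8))"
    using n by (simp add: ln_powr)
  also have "\<dots> \<le> ln x"
    using True n by (intro ln_mono) auto
  finally have ln_x: "ln n / 8 \<le> ln x" .
  have "C' / 4 * h = C' * (ln n / 4) / (sqrt n * h)"
    using h n by (simp add: power2_eq_square field_simps)
  also have "\<dots> \<le> C' * (ln n / 4) / x"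
    using x C' n by (intro divide_left_mono) auto
  also have "\<dots> \<le> C' * (ln (ln n) + 2 * ln x) / x"
    using x C' ln_x lnln by (intro divide_right_mono mult_left_mono) auto
  finally show ?thesis .
next
  case False
  have "C' / 4 * h \<le> C' * n powr (-1/8)"
    using h C' by simp
  also have "\<dots> = C' / n powr (1/8)"
    using n by (simp add: powr_minus field_simps)
  also have "\<dots> \<le> C' / x"
    using False x C' n by (intro divide_left_mono) auto
  also have "\<dots> \<le> C' * (ln (ln n) + 2 * ln x) / x"
  proof -
    have "1 \<le> ln (ln n) + 2 * ln x"
      using lnln ln_ge_zero[OF x(1)] by linarith
    then show ?thesis
      using x C' by (intro divide_right_mono) auto
  qed
  finally show ?thesis .
qed

lemma rjsq_bound_ge_rate:
  assumes C: "0 < C" "0 < C'" and n: "2 \<le> n"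
    and x: "1 \<le> sqrt (real n) * chi n"
    and lnln: "1 \<le> ln (ln (real n))"
    and h_le: "real n powr (-1/4) * sqrt (ln (real n)) \<le> real n powr (-1/8)"
  shows "min C (C'/4) * (real n powr (-1/4) * sqrt (ln (real n))) \<le> rjsq_bound C C' chi n"
proof -
  define h where "h = real n powr (-1/4) * sqrt (ln (real n))"
  have h_pos: "0 < h"
    using n by (simp add: h_def)
  show ?thesis
  proof (cases "h \<le> chi n")
    case True
    have "min C (C'/4) * h \<le> C * chi n"
      using True h_pos C by (intro mult_mono) auto
    then show ?thesis
      unfolding rjsq_bound_def h_def by simp
  next
    case False
    define x where "x = sqrt (real n) * chi n"
    have "h\<^sup>2 = real n powr (-1/2) * ln (real n)"
      using n by (simp add: h_def power_mult_distrib powr_power)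
    moreover have "sqrt (real n) * real n powr (-1/2) = 1"
      using n by (simp add: powr_half_sqrt[symmetric] powr_add[symmetric])
    ultimately have h_sq: "sqrt (real n) * h\<^sup>2 = ln (real n)"
      by (simp add: mult.assoc[symmetric])
    have ln_nchi: "ln (real n * (chi n)\<^sup>2) = 2 * ln x"
    proof -
      have "real n * (chi n)\<^sup>2 = x\<^sup>2"
        by (simp add: x_def power_mult_distrib)
      then show ?thesis
        using x by (simp add: x_def ln_realpow)
    qed
    have "min C (C'/4) * h \<le> C' / 4 * h"
      using h_pos by (intro mult_right_mono) auto
    also have "\<dots> \<le> C' * (ln (ln (real n)) + 2 * ln x) / x"
      using n C x lnln h_pos h_sq h_le False
      by (intro log_term_ge_rate) (auto simp: x_def h_def)
    also have "\<dots> \<le> rjsq_bound C C' chi n"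
      unfolding rjsq_bound_def x_def ln_nchi[unfolded x_def] by simp
    finally show ?thesis
      unfolding h_def .
  qed
qed

lemma rate_bigo_rjsq_bound:
  assumes C: "0 < C" "0 < C'"
    and chi_inf: "filterlim (\<lambda>n. sqrt (real n) * chi n) at_top sequentially"
  shows "(\<lambda>n. real n powr (-1/4) * sqrt (ln (real n))) \<in> O(\<lambda>n. rjsq_bound C C' chi n)"
proof (rule bigoI[where c = "1 / min C (C'/4)"])
  have "eventually (\<lambda>n. 1 \<le> sqrt (real n) * chi n) sequentially"
    using chi_inf by (simp add: filterlim_at_top)
  moreover have "eventually (\<lambda>n::nat. 1 \<le> ln (ln (real n))) sequentially"
    by real_asymp
  moreover have "eventually (\<lambda>n::nat. real n powr (-1/4) * sqrt (ln (real n)) \<le> real n powr (-1/8))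
      sequentially"
    by real_asymp
  ultimately show "eventually (\<lambda>n. norm (real n powr (-1/4) * sqrt (ln (real n)))
      \<le> 1 / min C (C'/4) * norm (rjsq_bound C C' chi n)) sequentially"
    using eventually_ge_at_top[of 2]
  proof eventually_elim
    case (elim n)
    then have "min C (C'/4) * (real n powr (-1/4) * sqrt (ln (real n))) \<le> rjsq_bound C C' chi n"
      using C by (intro rjsq_bound_ge_rate) auto
    moreover have "0 \<le> real n powr (-1/4) * sqrt (ln (real n))"
      using elim by simp
    moreover have "0 < min C (C'/4)"
      using C by simp
    ultimately show ?case
      by (simp add: field_simps abs_of_nonneg)
  qed
qed

lemma eventually_less_bigo_bound:
  fixes X :: "nat \<Rightarrow> ereal" and f g :: "nat \<Rightarrow> real"
  assumes "eventually (\<lambda>n. X n < ereal (f n)) F" "f \<in> O[F](g)" "eventually (\<lambda>n. 0 \<le> g n) F"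
  shows "\<exists>K. eventually (\<lambda>n. X n \<le> ereal (K * g n)) F"
proof -
  obtain K where "eventually (\<lambda>n. norm (f n) \<le> K * norm (g n)) F"
    using assms(2) by (elim landau_o.bigE)
  with assms(1,3) have "eventually (\<lambda>n. X n \<le> ereal (K * g n)) F"
  proof eventually_elim
    case (elim n)
    then have "f n \<le> K * g n"
      using abs_ge_self[of "f n"] by simp
    with elim show ?case
      by (simp add: order.strict_implies_order order.strict_trans2)
  qed
  then show ?thesis ..
qed

theorem corollary1:
  fixes M :: "'a measure"
    and s b :: nat and mu lam :: "nat \<Rightarrow> real" and beta :: real
    and chi :: "nat \<Rightarrow> real" and delta0 :: real and eps :: "nat \<Rightarrow> nat \<Rightarrow> real"
    and known :: bool and r :: "nat \<Rightarrow> nat \<Rightarrow> real"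
    and epsm :: "nat \<Rightarrow> nat \<Rightarrow> nat \<Rightarrow> nat list \<Rightarrow> real"
    and p :: "nat \<Rightarrow> real" and d :: "nat \<Rightarrow> nat \<Rightarrow> real"
    and z u :: "nat \<Rightarrow> 'a \<Rightarrow> real" and w :: "nat \<Rightarrow> nat \<Rightarrow> 'a \<Rightarrow> real"
    and og :: "nat \<Rightarrow> 'a \<Rightarrow> nat"
    and rt :: "nat \<Rightarrow> nat \<Rightarrow> 'a \<Rightarrow> nat" and rk :: "nat \<Rightarrow> nat \<Rightarrow> 'a \<Rightarrow> nat \<Rightarrow> nat"
    and C C' :: real
  assumes s2: "2 \<le> s" and b1: "1 \<le> b"
    and mu_pos: "0 < mu 1" and mu_mono: "\<forall>k\<in>{1..<s}. mu k \<le> mu (Suc k)"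
    and lam_pos: "\<forall>n. 0 < lam n"
    and heavy: "(\<lambda>n. sqrt (real n) * (1 - lam n / (\<Sum>k=1..s. mu k))) \<longlonglongrightarrow> beta"
    and chi_pos: "\<forall>n. 0 < chi n"
    and chi_0: "chi \<longlonglongrightarrow> 0"
    and chi_inf: "filterlim (\<lambda>n. sqrt (real n) * chi n) at_top sequentially"
    and chi_lil: "filterlim (\<lambda>n. sqrt (real n) * chi n / sqrt (ln (ln (real n)))) at_top sequentially"
    and eps_sum: "\<forall>n. (\<Sum>l=1..s. eps n l) = 0"
    and eps_1: "\<forall>n. eps n 1 = chi n"
    and eps_neg: "\<forall>n. \<forall>l\<in>{2..s}. eps n l < 0"
    and eps_range: "\<forall>n. \<forall>k\<in>{1..s}. \<forall>l\<in>{1..s}.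
         0 \<le> mu k / (\<Sum>i=1..s. mu i) + eps n l \<and> mu k / (\<Sum>i=1..s. mu i) + eps n l \<le> 1"
    and delta0: "0 < delta0" "\<forall>n. \<forall>l\<in>{2..s}. eps n l \<le> - delta0 * chi n"
    and p_pos: "\<forall>m\<in>{1..b}. 0 < p m" and p_sum: "(\<Sum>m=1..b. p m) = 1"
    and d_nonneg: "\<forall>m\<in>{1..b}. \<forall>k\<in>{1..s}. 0 \<le> d m k"
    and M: "prob_space M"
    and indep: "prob_space.indep_vars M (\<lambda>_. borel) (prim_family z w og u) (prim_index s)"
    and z_id: "\<forall>i\<ge>1. distr M borel (z i) = distr M borel (z 1)"
    and z_nonneg: "\<forall>i\<ge>1. AE x in M. 0 \<le> z i x"
    and z_mean: "integrable M (z 1)" "integral\<^sup>L M (z 1) = 1"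
    and z_var: "integrable M (\<lambda>x. (z 1 x)\<^sup>2)"
    and z_4: "integrable M (\<lambda>x. (z 1 x) ^ 4)"
    and w_id: "\<forall>k\<in>{1..s}. \<forall>i\<ge>1. distr M borel (w k i) = distr M borel (w k 1)"
    and w_nonneg: "\<forall>k\<in>{1..s}. \<forall>i\<ge>1. AE x in M. 0 \<le> w k i x"
    and w_mean: "\<forall>k\<in>{1..s}. integrable M (w k 1) \<and> integral\<^sup>L M (w k 1) = 1"
    and w_var: "\<forall>k\<in>{1..s}. integrable M (\<lambda>x. (w k 1 x)\<^sup>2)"
    and w_4: "\<forall>k\<in>{1..s}. integrable M (\<lambda>x. (w k 1 x) ^ 4)"
    and og_dist: "\<forall>j\<ge>1. \<forall>m\<in>{1..b}. measure M {x \<in> space M. og j x = m} = p m"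
    and u_unif: "\<forall>j\<ge>1. distr M lborel (u j) = uniform_measure lborel {0<..<1::real}"
    and plan: "known \<longrightarrow>
        (\<forall>m\<in>{1..b}. \<forall>k\<in>{1..s}. 0 \<le> r m k \<and> r m k \<le> 1) \<and>
        (\<forall>m\<in>{1..b}. (\<Sum>k=1..s. r m k) = 1) \<and>
        (\<forall>k\<in>{1..s}. mu k = (\<Sum>i=1..s. mu i) * (\<Sum>m=1..b. p m * r m k))"
    and epsm_cond: "known \<longrightarrow> (\<forall>n j x. 1 \<le> j \<longrightarrow>
        (\<forall>m\<in>{1..b}.
           (\<Sum>l=1..s. epsm n m l (map (rk n j x) [1..<Suc s])) = 0 \<and>
           0 \<le> epsm n m 1 (map (rk n j x) [1..<Suc s]) \<and>
           (\<forall>l\<in>{2..s}. epsm n m l (map (rk n j x) [1..<Suc s]) \<le> 0) \<and>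
           (\<forall>k\<in>{1..s}. 0 \<le> r m k + epsm n m (rk n j x k) (map (rk n j x) [1..<Suc s]) \<and>
                        r m k + epsm n m (rk n j x k) (map (rk n j x) [1..<Suc s]) \<le> 1)) \<and>
        (\<forall>l\<in>{1..s}. (\<Sum>m=1..b. p m * epsm n m l (map (rk n j x) [1..<Suc s])) = eps n l))"
    and ranking: "\<forall>n j x. 1 \<le> j \<longrightarrow> ranks_sorted s
        (\<lambda>k. Lim (at_left (appear_time lam z n j x))
                 (\<lambda>t. queue_len lam z w og d mu rt n k t x / mu k)) (rk n j x)"
    and routing: "\<forall>n j x. 1 \<le> j \<longrightarrow> (\<forall>k\<in>{1..s}. rt n j x = k \<longleftrightarrow>
        rjsq_kappa known s mu eps r epsm n (og j x) (rk n j x) (k - 1) \<le> u j x \<and>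
        u j x < rjsq_kappa known s mu eps r epsm n (og j x) (rk n j x) k)"
    and C_pos: "0 < C" "0 < C'"
    and bound: "\<forall>T>0. AE x in M. eventually (\<lambda>n.
        max_imbalance s (\<lambda>k t. scaled_load lam z w og d mu rt n k t x) T < ereal (rjsq_bound C C' chi n))
        sequentially"
  shows "(\<forall>C''>0. admissible_chi (\<lambda>n. C'' * real n powr (-1/4) * sqrt (ln (real n))) \<and>
            (\<forall>chi'. admissible_chi chi' \<longrightarrow>
               (\<lambda>n. rjsq_bound C C' (\<lambda>n. C'' * real n powr (-1/4) * sqrt (ln (real n))) n)
                 \<in> O(\<lambda>n. rjsq_bound C C' chi' n))) \<and>
         ((\<exists>C''>0. \<forall>n\<ge>2. chi n = C'' * real n powr (-1/4) * sqrt (ln (real n))) \<longrightarrow>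
            (\<forall>T>0. AE x in M. \<exists>K. eventually (\<lambda>n.
               max_imbalance s (\<lambda>k t. scaled_load lam z w og d mu rt n k t x) T
                 \<le> ereal (K * (real n powr (-1/4) * sqrt (ln (real n))))) sequentially))"
proof (intro conjI allI impI)
  fix C'' :: real
  assume "0 < C''"
  then show "admissible_chi (\<lambda>n. C'' * real n powr (-1/4) * sqrt (ln (real n)))"
    by (rule admissible_chi_rate)
  fix chi' :: "nat \<Rightarrow> real"
  assume "admissible_chi chi'"
  then show "(\<lambda>n. rjsq_bound C C' (\<lambda>n. C'' * real n powr (-1/4) * sqrt (ln (real n))) n)
      \<in> O(\<lambda>n. rjsq_bound C C' chi' n)"
    using \<open>0 < C''\<close> C_pos unfolding admissible_chi_def
    by (blast intro: landau_o.big_trans rjsq_bound_rate_bigo rate_bigo_rjsq_bound)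
next
  fix T :: real
  assume "\<exists>C''>0. \<forall>n\<ge>2. chi n = C'' * real n powr (-1/4) * sqrt (ln (real n))" and "0 < T"
  then obtain C'' where "0 < C''" and chi_eq: "\<forall>n\<ge>2. chi n = C'' * real n powr (-1/4) * sqrt (ln (real n))"
    by blast
  have "eventually (\<lambda>n. rjsq_bound C C' (\<lambda>n. C'' * real n powr (-1/4) * sqrt (ln (real n))) n
      = rjsq_bound C C' chi n) sequentially"
    using eventually_ge_at_top[of 2] by eventually_elim (simp add: rjsq_bound_def chi_eq)
  from landau_o.big.in_cong[OF this] rjsq_bound_rate_bigo[OF \<open>0 < C''\<close>, where C = C and C' = C']
  have bigo: "(\<lambda>n. rjsq_bound C C' chi n) \<in> O(\<lambda>n. real n powr (-1/4) * sqrt (ln (real n)))"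
    by simp
  have nonneg: "eventually (\<lambda>n::nat. 0 \<le> real n powr (-1/4) * sqrt (ln (real n))) sequentially"
    using eventually_ge_at_top[of 1] by eventually_elim simp
  show "AE x in M. \<exists>K. eventually (\<lambda>n.
      max_imbalance s (\<lambda>k t. scaled_load lam z w og d mu rt n k t x) T
        \<le> ereal (K * (real n powr (-1/4) * sqrt (ln (real n))))) sequentially"
    using bound[rule_format, OF \<open>0 < T\<close>]
    by (rule eventually_mono) (intro eventually_less_bigo_bound[OF _ bigo nonneg])
qed

end
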